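(* Let $L$ be a homogeneous second-order Lagrangian with fundamental form $\Theta$. If $\Theta$ is projectable to $J^4_+(E,2)$, then, in any local coordinates, $\displaystyle\sum_{\alpha,\beta}\frac{\partial^2L}{\partial u^\beta_{11}\,\partial u^\alpha_{21}}\,du^\beta\wedge du^\alpha=0,$ i.e. $\frac{\partial^2L}{\partial u^\beta_{11}\partial u^\alpha_{12}}=\frac{\partial^2L}{\partial u^\alpha_{11}\partial u^\beta_{12}}$ for all $\alpha,\beta$.
   Context: Let $E$ be a smooth manifold of dimension $n$ with local coordinates $(u^\alpha)$. For $k\ge 1$, $\mathcal F^k_{(2)}E$ denotes the bundle of $k$-th order 2-frames in $E$ (regular $k$-th order 2-velocities, i.e. $k$-jets at $0$ of maps $\mathbb R^2\to E$ of rank 2 at $0$), with induced coordinates $u^\alpha_{i_1\cdots i_s}$ ($0\le s\le k$, indices in $\{1,2\}$, totally symmetric in the subscripts). Pull-backs along the projections $\mathcal F^l_{(2)}E\to\mathcal F^k_{(2)}E$ are omitted. $\#(i_1\cdots i_s)$ denotes the number of distinct rearrangements of $(i_1,\dots,i_s)$; repeated indices in $\{1,2\}$ are summed. The total derivatives are the vector fields along $\mathcal F^{k+1}_{(2)}E\to\mathcal F^k_{(2)}E$ given by $\mathbf T_i=\sum_{s=0}^k \frac{1}{\#(i_1\cdots i_s)}u^\alpha_{i i_1\cdots i_s}\,\partial/\partial u^\alpha_{i_1\cdots i_s}$, and the vertical endomorphisms are the type $(1,1)$ tensor fields on $\mathcal F^{k+1}_{(2)}E$ given by $S^j=\sum_{s=0}^k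 \frac{s+1}{\#(i_1\cdots i_s)}\,\partial/\partial u^\alpha_{j i_1\cdots i_s}\otimes du^\alpha_{i_1\cdots i_s}$. The $S^i$ commute and $S^{i_1\cdots i_s}$ denotes their composite. On forms, $S^i$ acts as the degree-zero derivation $(S^i\omega)(X_1,\dots,X_r)=\sum_a \omega(X_1,\dots,S^iX_a,\dots,X_r)$ (zero on functions). The fundamental vector fields are $\Delta^{i_1\cdots i_s}_i=S^{i_1\cdots i_s}(\mathbf T_i)$, well-defined vector fields on $\mathcal F^{k+1}_{(2)}E$. Contraction with $\mathbf T_i$ and with $\Delta^{i_1\cdots i_s}_i$ is denoted $i_i$ and $i^{i_1\cdots i_s}_i$; the corresponding Lie derivatives are $d_i=d\,i_i+i_i\,d$ and $d^{i_1\cdots i_s}_i=d\,i^{i_1\cdots i_s}_i+i^{i_1\cdots i_s}_i d$. The $d_i$ commute and $d_{j_1\cdots j_s}$ denotes their composite. A second-order Lagrangian is a smooth function $L$ on (an open subset of) $\mathcal F^2_{(2)}E$; it is homogeneous if $d^i_jL=\delta^i_jL$ and $d^{ik}_jL=0$ for all $i,j,k$. Its Hilbert forms are the 1-forms $\vartheta^i=(S^i-\tfrac12 d_jS^{ji})\,dL$ on $\mathcal F^3_{(2)}E$. Define the operators $P^i_{(1)}=\tfrac14 S^i-\tfrac1{24}d_jS^{ji}+\tfrac1{192}d_{jk}S^{jki}$, mapping 2-forms on $\mathcal F^3_{(2)}E$ to 2-forms on $\mathcal F^5_{(2)}E$. The fundamental form of $L$ is the 2-form $\Theta=P^2_{(1)}d\vartheta^1-P^1_{(1)}d\vartheta^2$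 on $\mathcal F^5_{(2)}E$; it is the pull-back of a 2-form on $\mathcal F^4_{(2)}E$. $J^4_+(E,2)$ is the manifold of oriented fourth-order 2-dimensional contact elements of $E$, the quotient of $\mathcal F^4_{(2)}E$ by reparametrizations, whose fibres are generated by the fundamental vector fields; a form on $\mathcal F^4_{(2)}E$ is projectable to $J^4_+(E,2)$ exactly when its contractions $i^p_l,i^{pq}_l,i^{pqr}_l,i^{pqrs}_l$ and its Lie derivatives $d^p_l,d^{pq}_l,d^{pqr}_l,d^{pqrs}_l$ all vanish, for all indices. *)

theory Defs
  imports "HOL-Analysis.Analysis"
begin

text \<open>Coordinate model of the jet towers of 2-frames over a chart of E.
  A coordinate u^alpha_I is encoded as (alpha, a, b), where the symmetric
  multi-index I over {1,2} contains a ones and b twos; alpha ranges over a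
  finite type 'a (so n = CARD('a)).  A point is an assignment of real values
  to all coordinates (pull-backs along the projections are implicit).
  Forms are given by coefficient functions: a 1-form w is sum w_c du_c,
  a 2-form W satisfies W(d/du_c, d/du_c') = W c c' (antisymmetric),
  a 3-form similarly.  Vector fields are sum X_c d/du_c.\<close>

type_synonym 'a crd = "'a \<times> nat \<times> nat"
type_synonym 'a pt = "'a crd \<Rightarrow> real"
type_synonym 'a fn = "'a pt \<Rightarrow> real"
type_synonym 'a vf = "'a crd \<Rightarrow> 'a fn"
type_synonym 'a form1 = "'a crd \<Rightarrow> 'a fn"
type_synonym 'a form2 = "'a crd \<Rightarrow> 'a crd \<Rightarrow> 'a fn"
type_synonym 'a form3 = "'a crd \<Rightarrow> 'a crd \<Rightarrow> 'a crd \<Rightarrow> 'a fn"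

definition crd_ord :: "'a crd \<Rightarrow> nat" where
  "crd_ord c = fst (snd c) + snd (snd c)"

text \<open>Truncation order: all forms occurring have coordinate support of order
  at most 5, so summing over coordinates of order at most 6 is exact.\<close>
definition Ntr :: nat where "Ntr = 6"

definition crds :: "'a crd set" where
  "crds = {c. crd_ord c \<le> Ntr}"

definition upi :: "nat \<Rightarrow> 'a crd \<Rightarrow> 'a crd" where
  "upi j c = (if j = 1 then (fst c, Suc (fst (snd c)), snd (snd c))
              else (fst c, fst (snd c), Suc (snd (snd c))))"

definition pd :: "'a crd \<Rightarrow> 'a fn \<Rightarrow> 'a fn" where
  "pd c f p = deriv (\<lambda>t. f (p(c := p c + t))) 0"

fun pds :: "'a crd list \<Rightarrow> 'a fn \<Rightarrow> 'a fn" where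
  "pds [] f = f"
| "pds (c # cs) f = pd c (pds cs f)"

text \<open>Total derivative T_i = sum_I u_{iI} d/du_I (the factor 1/#(I) cancels the
  #(I) ordered rearrangements of I).\<close>
definition TT :: "nat \<Rightarrow> 'a vf" where
  "TT i c p = (if crd_ord c \<le> Ntr then p (upi i c) else 0)"

text \<open>Vertical endomorphism on vector fields: S^j (d/du_I) = (s+1) d/du_{jI}.\<close>
definition Sv :: "nat \<Rightarrow> 'a vf \<Rightarrow> 'a vf" where
  "Sv j X e p = (case e of (\<alpha>, a, b) \<Rightarrow>
     (if j = 1 then (if a = 0 then 0 else real (a + b) * X (\<alpha>, a - 1, b) p)
      else (if b = 0 then 0 else real (a + b) * X (\<alpha>, a, b - 1) p)))"

definition Dl :: "nat \<Rightarrow> nat list \<Rightarrow> 'a vf" where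
  "Dl l J = foldr Sv J (TT l)"

text \<open>Vertical endomorphisms on 1- and 2-forms (degree-zero derivation).\<close>
definition S1 :: "nat \<Rightarrow> 'a form1 \<Rightarrow> 'a form1" where
  "S1 j w c p = real (crd_ord c + 1) * w (upi j c) p"

definition S2 :: "nat \<Rightarrow> 'a form2 \<Rightarrow> 'a form2" where
  "S2 j W c c' p = real (crd_ord c + 1) * W (upi j c) c' p
                 + real (crd_ord c' + 1) * W c (upi j c') p"

definition dd0 :: "'a fn \<Rightarrow> 'a form1" where
  "dd0 f c = pd c f"

definition dd1 :: "'a form1 \<Rightarrow> 'a form2" where
  "dd1 w c c' p = pd c (w c') p - pd c' (w c) p"

definition dd2 :: "'a form2 \<Rightarrow> 'a form3" where
  "dd2 W a b c p = pd a (W b c) p - pd b (W a c) p + pd c (W a b) p"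

definition ic1 :: "'a::finite vf \<Rightarrow> 'a form1 \<Rightarrow> 'a fn" where
  "ic1 X w p = (\<Sum>a\<in>crds. X a p * w a p)"

definition ic2 :: "'a::finite vf \<Rightarrow> 'a form2 \<Rightarrow> 'a form1" where
  "ic2 X W c p = (\<Sum>a\<in>crds. X a p * W a c p)"

definition ic3 :: "'a::finite vf \<Rightarrow> 'a form3 \<Rightarrow> 'a form2" where
  "ic3 X W b c p = (\<Sum>a\<in>crds. X a p * W a b c p)"

definition lie0 :: "'a::finite vf \<Rightarrow> 'a fn \<Rightarrow> 'a fn" where
  "lie0 X f = ic1 X (dd0 f)"

definition lie1 :: "'a::finite vf \<Rightarrow> 'a form1 \<Rightarrow> 'a form1" where
  "lie1 X w c p = dd0 (ic1 X w) c p + ic2 X (dd1 w) c p"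

definition lie2 :: "'a::finite vf \<Rightarrow> 'a form2 \<Rightarrow> 'a form2" where
  "lie2 X W c c' p = dd1 (ic2 X W) c c' p + ic3 X (dd2 W) c c' p"

definition hilbert :: "nat \<Rightarrow> 'a::finite fn \<Rightarrow> 'a form1" where
  "hilbert i L c p = S1 i (dd0 L) c p
     - 1/2 * (\<Sum>j\<in>{1,2::nat}. lie1 (TT j) (S1 j (S1 i (dd0 L))) c p)"

definition Pop :: "nat \<Rightarrow> 'a::finite form2 \<Rightarrow> 'a form2" where
  "Pop i W c c' p = 1/4 * S2 i W c c' p
     - 1/24 * (\<Sum>j\<in>{1,2::nat}. lie2 (TT j) (S2 j (S2 i W)) c c' p)
     + 1/192 * (\<Sum>j\<in>{1,2::nat}. \<Sum>k\<in>{1,2::nat}.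
          lie2 (TT j) (lie2 (TT k) (S2 j (S2 k (S2 i W)))) c c' p)"

definition fundamental_form :: "'a::finite fn \<Rightarrow> 'a form2" where
  "fundamental_form L c c' p =
     Pop 2 (dd1 (hilbert 1 L)) c c' p - Pop 1 (dd1 (hilbert 2 L)) c c' p"

text \<open>Domain: open subset of F^2_(2)E (lifted to the tower): open, determined
  by coordinates of order at most 2, consisting of regular 2-frames.\<close>
definition frame_domain :: "'a pt set \<Rightarrow> bool" where
  "frame_domain D \<longleftrightarrow> open D
     \<and> (\<forall>p q. (\<forall>c. crd_ord c \<le> 2 \<longrightarrow> p c = q c) \<longrightarrow> (p \<in> D \<longleftrightarrow> q \<in> D))
     \<and> (\<forall>p\<in>D. \<exists>\<alpha> \<beta>. p (\<alpha>,1,0) * p (\<beta>,0,1) - p (\<beta>,1,0) * p (\<alpha>,0,1) \<noteq> 0)"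

definition lagrangian2 :: "'a pt set \<Rightarrow> 'a fn \<Rightarrow> bool" where
  "lagrangian2 D L \<longleftrightarrow>
     (\<forall>p\<in>D. \<forall>q\<in>D. (\<forall>c. crd_ord c \<le> 2 \<longrightarrow> p c = q c) \<longrightarrow> L p = L q)
     \<and> (\<forall>cs. continuous_on D (pds cs L)
          \<and> (\<forall>p\<in>D. \<forall>c. (\<lambda>t. pds cs L (p(c := p c + t))) differentiable (at 0)))"

definition homogeneous :: "'a::finite pt set \<Rightarrow> 'a fn \<Rightarrow> bool" where
  "homogeneous D L \<longleftrightarrow> (\<forall>i\<in>{1,2}. \<forall>j\<in>{1,2}. \<forall>k\<in>{1,2}. \<forall>p\<in>D.
      lie0 (Dl j [i]) L p = (if i = j then L p else 0)
    \<and> lie0 (Dl j [i, k]) L p = 0)"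

definition projectable4 :: "'a::finite pt set \<Rightarrow> 'a form2 \<Rightarrow> bool" where
  "projectable4 D W \<longleftrightarrow> (\<forall>l\<in>{1,2}. \<forall>J. J \<noteq> [] \<and> length J \<le> 4 \<and> set J \<subseteq> {1,2} \<longrightarrow>
      (\<forall>p\<in>D. \<forall>c. ic2 (Dl l J) W c p = 0)
    \<and> (\<forall>p\<in>D. \<forall>c c'. lie2 (Dl l J) W c c' p = 0))"

end

(*
  Homogeneity of L under the fundamental vector field Delta^1_1 is an Euler
  relation: in these coordinates Delta^1_1 is the weighted Euler field
  sum_a w(a) u_a d/du_a, with w(u_(a,b)) = a + b if a > 0 and w = 0 otherwise.
  Hence every second partial derivative d^2 L / du_e du_f is an eigenfunction of
  Delta^1_1 with eigenvalue 1 - w(e) - w(f).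

  Unwinding Theta = P^2 d theta^1 - P^1 d theta^2, only coefficients of
  d theta^k of total order at most 3 survive, and of the operators P^i only the
  chain of S^1's; with Schwarz's theorem the component of Theta at
  (u^gamma_11, u^beta) is F = -21/32 A(gamma,beta) + 5/32 A(beta,gamma), where
  A(gamma,beta) = d^2 L / du^beta_11 du^gamma_12, an eigenfunction with eigenvalue -3.
  Projectability gives d^1_1 Theta = 0, and on this component the Lie derivative
  is 2 F - 3 F = -F (the 2 is the weight of u^gamma_11).  So F = 0 for both
  orderings of (gamma, beta); as 21^2 <> 5^2 this forces A = 0, in particular A
  is symmetric.
*)

theory Submission
  imports Defs
begin

declare split_paired_All [simp del]

definition coord_line :: "'a fn \<Rightarrow> 'a pt \<Rightarrow> 'a crd \<Rightarrow> real \<Rightarrow> real" where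
  "coord_line f p c = (\<lambda>t. f (p(c := p c + t)))"

abbreviation line_differentiable :: "'a fn \<Rightarrow> 'a pt \<Rightarrow> 'a crd \<Rightarrow> bool" where
  "line_differentiable f p c \<equiv> coord_line f p c differentiable (at 0)"

lemma pd_eq_deriv_coord_line: "pd c f p = deriv (coord_line f p c) 0"
  by (simp add: pd_def coord_line_def)

lemma DERIV_pd: "line_differentiable f p c \<Longrightarrow> (coord_line f p c has_real_derivative pd c f p) (at 0)"
  by (simp add: pd_eq_deriv_coord_line DERIV_deriv_iff_real_differentiable)

lemma pd_eqI: "(coord_line f p c has_real_derivative v) (at 0) \<Longrightarrow> pd c f p = v"
  by (simp add: pd_eq_deriv_coord_line DERIV_imp_deriv)

lemma pd_const: "pd c (\<lambda>q. k) = (\<lambda>q. 0)"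
  by (intro ext pd_eqI) (simp add: coord_line_def)

lemma pd_coord: "pd c (\<lambda>q. q e) = (\<lambda>q. if c = e then 1 else 0)"
  by (intro ext pd_eqI) (auto simp: coord_line_def intro!: derivative_eq_intros)

lemma pd_cmult_coord: "pd c (\<lambda>q. k * q e) = (\<lambda>q. if c = e then k else 0)"
  by (intro ext pd_eqI) (auto simp: coord_line_def intro!: derivative_eq_intros)

lemma line_differentiable_coord: "line_differentiable (\<lambda>q. q e) p c"
  by (cases "c = e") (auto simp: coord_line_def intro!: derivative_intros)

lemma pd_add:
  assumes "line_differentiable f p c" "line_differentiable g p c"
  shows "pd c (\<lambda>q. f q + g q) p = pd c f p + pd c g p"
  using DERIV_add[OF DERIV_pd[OF assms(1)] DERIV_pd[OF assms(2)]]
  by (intro pd_eqI) (simp add: coord_line_def)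

lemma pd_diff:
  assumes "line_differentiable f p c" "line_differentiable g p c"
  shows "pd c (\<lambda>q. f q - g q) p = pd c f p - pd c g p"
  using DERIV_diff[OF DERIV_pd[OF assms(1)] DERIV_pd[OF assms(2)]]
  by (intro pd_eqI) (simp add: coord_line_def)

lemma pd_mult:
  assumes "line_differentiable f p c" "line_differentiable g p c"
  shows "pd c (\<lambda>q. f q * g q) p = pd c f p * g p + f p * pd c g p"
  using DERIV_mult[OF DERIV_pd[OF assms(1)] DERIV_pd[OF assms(2)]]
  by (intro pd_eqI) (simp add: coord_line_def mult.commute)

lemma pd_sum:
  assumes "\<And>a. a \<in> A \<Longrightarrow> line_differentiable (f a) p c"
  shows "pd c (\<lambda>q. \<Sum>a\<in>A. f a q) p = (\<Sum>a\<in>A. pd c (f a) p)"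
  using DERIV_sum[where f="\<lambda>t a. coord_line (f a) p c t", OF DERIV_pd[OF assms]]
  by (intro pd_eqI) (simp add: coord_line_def)

lemma line_differentiable_add:
  "line_differentiable f p c \<Longrightarrow> line_differentiable g p c \<Longrightarrow>
    line_differentiable (\<lambda>q. f q + g q) p c"
  by (simp add: coord_line_def differentiable_add)

lemma line_differentiable_mult:
  "line_differentiable f p c \<Longrightarrow> line_differentiable g p c \<Longrightarrow>
    line_differentiable (\<lambda>q. f q * g q) p c"
  by (simp add: coord_line_def differentiable_mult)

lemma eventually_coord_line_in_open:
  fixes D :: "('b \<Rightarrow> real) set"
  assumes "open D" "p \<in> D"
  shows "eventually (\<lambda>t. p(c := p c + t) \<in> D) (nhds 0)"
proof -
  have "continuous_on UNIV (\<lambda>t::real. p(c := p c + t))"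
    apply (rule continuous_on_coordinatewise_then_product)
    subgoal for i by (cases "i = c") (auto intro!: continuous_intros)
    done
  then have "open ((\<lambda>t::real. p(c := p c + t)) -` D)"
    using assms(1) open_vimage by blast
  then show ?thesis
    using assms(2) eventually_nhds_in_open by fastforce
qed

lemma square_in_open:
  fixes U :: "('b \<Rightarrow> real) set"
  assumes "open U" "p \<in> U"
  obtains r where "r > 0" "\<And>s t. \<bar>s\<bar> < r \<Longrightarrow> \<bar>t\<bar> < r \<Longrightarrow> p(e := p e + s, f := p f + t) \<in> U"
proof -
  let ?Q = "\<lambda>x::real \<times> real. p(e := p e + fst x, f := p f + snd x)"
  have "continuous_on UNIV ?Q"
    apply (rule continuous_on_coordinatewise_then_product)
    subgoal for i by (cases "i = f"; cases "i = e") (auto intro!: continuous_intros)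
    done
  then have "open (?Q -` U)"
    using assms(1) open_vimage by blast
  moreover have "(0, 0) \<in> ?Q -` U"
    using assms(2) by simp
  ultimately obtain r where r: "r > 0" "ball (0, 0) r \<subseteq> ?Q -` U"
    using open_contains_ball by blast
  show thesis
  proof
    show "r / 2 > 0" using r by simp
    fix s t :: real
    assume "\<bar>s\<bar> < r / 2" "\<bar>t\<bar> < r / 2"
    then have "(s, t) \<in> ball (0, 0) r"
      using norm_Pair_le[of "-s" "-t"] by (simp add: dist_norm)
    then show "p(e := p e + s, f := p f + t) \<in> U"
      using r(2) by auto
  qed
qed

fun smooth_upto :: "nat \<Rightarrow> 'a pt set \<Rightarrow> 'a fn \<Rightarrow> bool" where
  "smooth_upto 0 D f \<longleftrightarrow> (\<forall>p\<in>D. \<forall>c. line_differentiable f p c)"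
| "smooth_upto (Suc n) D f \<longleftrightarrow>
    (\<forall>p\<in>D. \<forall>c. line_differentiable f p c) \<and> (\<forall>c. smooth_upto n D (pd c f))"

definition coord_smooth :: "'a pt set \<Rightarrow> 'a fn \<Rightarrow> bool" where
  "coord_smooth D f \<longleftrightarrow> (\<forall>n. smooth_upto n D f)"

lemma smooth_upto_line_differentiable:
  "smooth_upto n D f \<Longrightarrow> p \<in> D \<Longrightarrow> line_differentiable f p c"
  by (cases n) auto

lemma smooth_upto_Suc_imp: "smooth_upto (Suc n) D f \<Longrightarrow> smooth_upto n D f"
  by (induction n arbitrary: f) auto

lemma smooth_upto_const: "smooth_upto n D (\<lambda>q. k)"
  by (induction n arbitrary: k) (auto simp: coord_line_def pd_const)

lemma smooth_upto_coord: "smooth_upto n D (\<lambda>q. q e)"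
  by (cases n) (auto simp: line_differentiable_coord smooth_upto_const pd_coord)

locale open_domain =
  fixes D :: "'a pt set"
  assumes open_D: "open D"
begin

lemma eventually_eq_on_coord_line:
  assumes "\<forall>q\<in>D. f q = g q" "p \<in> D"
  shows "eventually (\<lambda>t. coord_line f p c t = coord_line g p c t) (nhds 0)"
  using eventually_coord_line_in_open[OF open_D assms(2), of c] assms(1)
  by (auto simp: coord_line_def elim: eventually_mono)

lemma pd_cong_on:
  assumes "\<forall>q\<in>D. f q = g q" "p \<in> D"
  shows "pd c f p = pd c g p"
  unfolding pd_eq_deriv_coord_line by (rule deriv_cong_ev[OF eventually_eq_on_coord_line[OF assms] refl])

lemma pd_eq_0_on: "\<forall>q\<in>D. f q = 0 \<Longrightarrow> p \<in> D \<Longrightarrow> pd c f p = 0"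
  using pd_cong_on[of f "\<lambda>q. 0" p c] by (simp add: pd_const)

lemma line_differentiable_cong_on:
  assumes "\<forall>q\<in>D. f q = g q" "p \<in> D" "line_differentiable f p c"
  shows "line_differentiable g p c"
  using DERIV_cong_ev[OF refl eventually_eq_on_coord_line[OF assms(1,2)] refl] DERIV_pd[OF assms(3)]
  by (auto simp: real_differentiable_def)

lemma smooth_upto_cong_on: "smooth_upto n D f \<Longrightarrow> \<forall>q\<in>D. f q = g q \<Longrightarrow> smooth_upto n D g"
proof (induction n arbitrary: f g)
  case 0
  then show ?case using line_differentiable_cong_on by auto
next
  case (Suc n)
  have "smooth_upto n D (pd c g)" for c
  proof (rule Suc.IH)
    show "smooth_upto n D (pd c f)" using Suc.prems(1) by simp
    show "\<forall>q\<in>D. pd c f q = pd c g q" using Suc.prems(2) pd_cong_on by blast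
  qed
  then show ?case
    using Suc.prems line_differentiable_cong_on by auto
qed

lemma smooth_upto_add: "smooth_upto n D f \<Longrightarrow> smooth_upto n D g \<Longrightarrow> smooth_upto n D (\<lambda>q. f q + g q)"
proof (induction n arbitrary: f g)
  case 0
  then show ?case by (auto intro: line_differentiable_add)
next
  case (Suc n)
  have "smooth_upto n D (pd c (\<lambda>q. f q + g q))" for c
  proof (rule smooth_upto_cong_on)
    show "smooth_upto n D (\<lambda>q. pd c f q + pd c g q)"
      using Suc by auto
    show "\<forall>q\<in>D. pd c f q + pd c g q = pd c (\<lambda>q. f q + g q) q"
      using Suc.prems by (auto intro!: pd_add[symmetric])
  qed
  then show ?case
    using Suc.prems by (auto intro: line_differentiable_add)
qed

lemma smooth_upto_mult: "smooth_upto n D f \<Longrightarrow> smooth_upto n D g \<Longrightarrow> smooth_upto n D (\<lambda>q. f q * g q)"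
proof (induction n arbitrary: f g)
  case 0
  then show ?case by (auto intro: line_differentiable_mult)
next
  case (Suc n)
  have "smooth_upto n D (pd c (\<lambda>q. f q * g q))" for c
  proof (rule smooth_upto_cong_on)
    have "smooth_upto n D f" "smooth_upto n D g"
      using Suc.prems smooth_upto_Suc_imp by blast+
    moreover have "smooth_upto n D (pd c f)" "smooth_upto n D (pd c g)"
      using Suc.prems by simp_all
    ultimately show "smooth_upto n D (\<lambda>q. pd c f q * g q + f q * pd c g q)"
      by (intro smooth_upto_add Suc.IH)
    show "\<forall>q\<in>D. pd c f q * g q + f q * pd c g q = pd c (\<lambda>q. f q * g q) q"
      using Suc.prems by (auto intro!: pd_mult[symmetric])
  qed
  then show ?case
    using Suc.prems by (auto intro: line_differentiable_mult)
qed

lemma smooth_upto_sum: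
  "finite A \<Longrightarrow> (\<And>a. a \<in> A \<Longrightarrow> smooth_upto n D (f a)) \<Longrightarrow> smooth_upto n D (\<lambda>q. \<Sum>a\<in>A. f a q)"
  by (induction A rule: finite_induct) (auto intro: smooth_upto_add smooth_upto_const)

lemma coord_smooth_line_differentiable: "coord_smooth D f \<Longrightarrow> p \<in> D \<Longrightarrow> line_differentiable f p c"
  unfolding coord_smooth_def using smooth_upto_line_differentiable by blast

lemma coord_smooth_pd: "coord_smooth D f \<Longrightarrow> coord_smooth D (pd c f)"
  unfolding coord_smooth_def by (metis smooth_upto.simps(2))

lemma coord_smooth_const: "coord_smooth D (\<lambda>q. k)"
  by (simp add: coord_smooth_def smooth_upto_const)

lemma coord_smooth_coord: "coord_smooth D (\<lambda>q. q e)"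
  by (simp add: coord_smooth_def smooth_upto_coord)

lemma coord_smooth_add: "coord_smooth D f \<Longrightarrow> coord_smooth D g \<Longrightarrow> coord_smooth D (\<lambda>q. f q + g q)"
  by (simp add: coord_smooth_def smooth_upto_add)

lemma coord_smooth_mult: "coord_smooth D f \<Longrightarrow> coord_smooth D g \<Longrightarrow> coord_smooth D (\<lambda>q. f q * g q)"
  by (simp add: coord_smooth_def smooth_upto_mult)

lemma coord_smooth_cmult: "coord_smooth D f \<Longrightarrow> coord_smooth D (\<lambda>q. k * f q)"
  by (rule coord_smooth_mult[OF coord_smooth_const])

lemma coord_smooth_diff: "coord_smooth D f \<Longrightarrow> coord_smooth D g \<Longrightarrow> coord_smooth D (\<lambda>q. f q - g q)"
  using coord_smooth_add[OF _ coord_smooth_cmult[of g "-1"]] by simp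

lemma coord_smooth_sum:
  "finite A \<Longrightarrow> (\<And>a. a \<in> A \<Longrightarrow> coord_smooth D (f a)) \<Longrightarrow> coord_smooth D (\<lambda>q. \<Sum>a\<in>A. f a q)"
  by (simp add: coord_smooth_def smooth_upto_sum)

lemma coord_smooth_if:
  "coord_smooth D f \<Longrightarrow> coord_smooth D g \<Longrightarrow> coord_smooth D (\<lambda>q. if P then f q else g q)"
  by (cases P) auto

lemmas coord_smooth_intros = coord_smooth_pd coord_smooth_const coord_smooth_coord coord_smooth_add
  coord_smooth_mult coord_smooth_cmult coord_smooth_diff coord_smooth_sum coord_smooth_if

lemma pd_add_smooth:
  "coord_smooth D f \<Longrightarrow> coord_smooth D g \<Longrightarrow> p \<in> D \<Longrightarrow> pd c (\<lambda>q. f q + g q) p = pd c f p + pd c g p"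
  by (intro pd_add coord_smooth_line_differentiable)

lemma pd_diff_smooth:
  "coord_smooth D f \<Longrightarrow> coord_smooth D g \<Longrightarrow> p \<in> D \<Longrightarrow> pd c (\<lambda>q. f q - g q) p = pd c f p - pd c g p"
  by (intro pd_diff coord_smooth_line_differentiable)

lemma pd_mult_smooth:
  "coord_smooth D f \<Longrightarrow> coord_smooth D g \<Longrightarrow> p \<in> D \<Longrightarrow>
    pd c (\<lambda>q. f q * g q) p = pd c f p * g p + f p * pd c g p"
  by (intro pd_mult coord_smooth_line_differentiable)

lemma pd_cmult_smooth: "coord_smooth D f \<Longrightarrow> p \<in> D \<Longrightarrow> pd c (\<lambda>q. k * f q) p = k * pd c f p"
  using pd_mult_smooth[OF coord_smooth_const, of f p c k] by (simp add: pd_const)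

lemma pd_sum_smooth:
  "(\<And>a. a \<in> A \<Longrightarrow> coord_smooth D (f a)) \<Longrightarrow> p \<in> D \<Longrightarrow>
    pd c (\<lambda>q. \<Sum>a\<in>A. f a q) p = (\<Sum>a\<in>A. pd c (f a) p)"
  by (intro pd_sum coord_smooth_line_differentiable) auto

section \<open>Symmetry of second partial derivatives\<close>

lemma DERIV_along_coord:
  assumes "coord_smooth D g" "q(e := q e + s) \<in> D"
  shows "((\<lambda>s. g (q(e := q e + s))) has_real_derivative pd e g (q(e := q e + s))) (at s)"
proof -
  have "coord_line g (q(e := q e + s)) e = (\<lambda>u. g (q(e := q e + (u + s))))"
    by (simp add: coord_line_def algebra_simps)
  then have "((\<lambda>u. g (q(e := q e + (u + s)))) has_real_derivative pd e g (q(e := q e + s))) (at 0)"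
    using DERIV_pd[OF coord_smooth_line_differentiable[OF assms, where c=e]] by simp
  then show ?thesis
    using DERIV_shift[where x=0 and z=s] by simp
qed

lemma DERIV_square_first:
  assumes "e \<noteq> f" "coord_smooth D g" "p(e := p e + s, f := p f + t) \<in> D"
  shows "((\<lambda>s. g (p(e := p e + s, f := p f + t)))
    has_real_derivative pd e g (p(e := p e + s, f := p f + t))) (at s)"
proof -
  have "(p(f := p f + t))(e := (p(f := p f + t)) e + s) = p(e := p e + s, f := p f + t)" for s
    using assms(1) by (intro ext) simp
  then show ?thesis
    using DERIV_along_coord[OF assms(2), of "p(f := p f + t)" e s] assms(3) by simp
qed

lemma DERIV_square_second:
  assumes "e \<noteq> f" "coord_smooth D g" "p(e := p e + s, f := p f + t) \<in> D"
  shows "((\<lambda>t. g (p(e := p e + s, f := p f + t)))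
    has_real_derivative pd f g (p(e := p e + s, f := p f + t))) (at t)"
  using DERIV_along_coord[OF assms(2), of "p(e := p e + s)" f t] assms by simp

lemma second_difference_mean_values:
  assumes ef: "e \<noteq> f" and g: "coord_smooth D g" and h: "0 < h"
    and square: "\<And>s t. 0 \<le> s \<Longrightarrow> s \<le> h \<Longrightarrow> 0 \<le> t \<Longrightarrow> t \<le> h \<Longrightarrow> p(e := p e + s, f := p f + t) \<in> D"
  obtains s1 t1 s2 t2 where "0 < s1" "s1 < h" "0 < t1" "t1 < h" "0 < s2" "s2 < h" "0 < t2" "t2 < h"
    "pd f (pd e g) (p(e := p e + s1, f := p f + t1)) = pd e (pd f g) (p(e := p e + s2, f := p f + t2))"
proof -
  let ?P = "\<lambda>s t. p(e := p e + s, f := p f + t)"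
  have ge: "coord_smooth D (pd e g)" and gf: "coord_smooth D (pd f g)"
    using g by (simp_all add: coord_smooth_pd)
  have diff_along_e: "((\<lambda>s. g (?P s h) - g (?P s 0)) has_real_derivative pd e g (?P s h) - pd e g (?P s 0)) (at s)"
    if "0 \<le> s" "s \<le> h" for s
    using that h by (intro DERIV_diff DERIV_square_first[OF ef g] square) auto
  obtain s1 where s1: "0 < s1" "s1 < h"
    "(g (?P h h) - g (?P h 0)) - (g (?P 0 h) - g (?P 0 0)) = (h - 0) * (pd e g (?P s1 h) - pd e g (?P s1 0))"
    using MVT2[OF h diff_along_e] by blast
  have pd_e_along_f: "((\<lambda>t. pd e g (?P s1 t)) has_real_derivative pd f (pd e g) (?P s1 t)) (at t)"
    if "0 \<le> t" "t \<le> h" for t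
    using that s1 by (intro DERIV_square_second[OF ef ge] square) auto
  obtain t1 where t1: "0 < t1" "t1 < h"
    "pd e g (?P s1 h) - pd e g (?P s1 0) = (h - 0) * pd f (pd e g) (?P s1 t1)"
    using MVT2[OF h pd_e_along_f] by blast
  have diff_along_f: "((\<lambda>t. g (?P h t) - g (?P 0 t)) has_real_derivative pd f g (?P h t) - pd f g (?P 0 t)) (at t)"
    if "0 \<le> t" "t \<le> h" for t
    using that h by (intro DERIV_diff DERIV_square_second[OF ef g] square) auto
  obtain t2 where t2: "0 < t2" "t2 < h"
    "(g (?P h h) - g (?P 0 h)) - (g (?P h 0) - g (?P 0 0)) = (h - 0) * (pd f g (?P h t2) - pd f g (?P 0 t2))"
    using MVT2[OF h diff_along_f] by blast
  have pd_f_along_e: "((\<lambda>s. pd f g (?P s t2)) has_real_derivative pd e (pd f g) (?P s t2)) (at s)"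
    if "0 \<le> s" "s \<le> h" for s
    using that t2 by (intro DERIV_square_first[OF ef gf] square) auto
  obtain s2 where s2: "0 < s2" "s2 < h"
    "pd f g (?P h t2) - pd f g (?P 0 t2) = (h - 0) * pd e (pd f g) (?P s2 t2)"
    using MVT2[OF h pd_f_along_e] by blast
  have "h * (h * pd f (pd e g) (?P s1 t1)) = h * (h * pd e (pd f g) (?P s2 t2))"
    using s1(3) t1(3) t2(3) s2(3) by (simp add: algebra_simps)
  then have "pd f (pd e g) (?P s1 t1) = pd e (pd f g) (?P s2 t2)"
    using h by simp
  with s1(1,2) t1(1,2) s2(1,2) t2(1,2) show thesis
    by (rule that)
qed

lemma square_close_in_domain:
  assumes "continuous_on D H" "p \<in> D" "\<epsilon> > 0"
  obtains r where "r > 0" "\<And>s t. \<bar>s\<bar> < r \<Longrightarrow> \<bar>t\<bar> < r \<Longrightarrow>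
    p(e := p e + s, f := p f + t) \<in> D \<and> dist (H (p(e := p e + s, f := p f + t))) (H p) < \<epsilon>"
proof -
  have "open (H -` ball (H p) \<epsilon> \<inter> D)"
    using assms(1) continuous_on_open_vimage[OF open_D] open_ball by blast
  moreover have "p \<in> H -` ball (H p) \<epsilon> \<inter> D"
    using assms(2,3) by simp
  ultimately obtain r where "r > 0"
    "\<And>s t. \<bar>s\<bar> < r \<Longrightarrow> \<bar>t\<bar> < r \<Longrightarrow> p(e := p e + s, f := p f + t) \<in> H -` ball (H p) \<epsilon> \<inter> D"
    by (rule square_in_open[where e=e and f=f]) blast
  then show thesis
    using that by (auto simp: dist_commute)
qed

theorem pd_commute:
  assumes g: "coord_smooth D g" and p: "p \<in> D"
    and cont: "continuous_on D (pd f (pd e g))" "continuous_on D (pd e (pd f g))"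
  shows "pd f (pd e g) p = pd e (pd f g) p"
proof (rule ccontr)
  let ?P = "\<lambda>s t. p(e := p e + s, f := p f + t)"
  let ?H1 = "pd f (pd e g)" and ?H2 = "pd e (pd f g)"
  assume ne: "?H1 p \<noteq> ?H2 p"
  then have ef: "e \<noteq> f" by auto
  define \<epsilon> where "\<epsilon> = \<bar>?H1 p - ?H2 p\<bar> / 2"
  have \<epsilon>: "\<epsilon> > 0" using ne by (simp add: \<epsilon>_def)
  obtain r1 where r1: "r1 > 0" "\<And>s t. \<bar>s\<bar> < r1 \<Longrightarrow> \<bar>t\<bar> < r1 \<Longrightarrow> ?P s t \<in> D \<and> dist (?H1 (?P s t)) (?H1 p) < \<epsilon>"
    by (rule square_close_in_domain[OF cont(1) p \<epsilon>, where e=e and f=f]) blast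
  obtain r2 where r2: "r2 > 0" "\<And>s t. \<bar>s\<bar> < r2 \<Longrightarrow> \<bar>t\<bar> < r2 \<Longrightarrow> dist (?H2 (?P s t)) (?H2 p) < \<epsilon>"
    by (rule square_close_in_domain[OF cont(2) p \<epsilon>, where e=e and f=f]) blast
  define h where "h = min r1 r2 / 2"
  have h: "0 < h" "h < r1" "h < r2" using r1(1) r2(1) by (auto simp: h_def)
  obtain s1 t1 s2 t2 where st: "0 < s1" "s1 < h" "0 < t1" "t1 < h" "0 < s2" "s2 < h" "0 < t2" "t2 < h"
    and eq: "?H1 (?P s1 t1) = ?H2 (?P s2 t2)"
  proof (rule second_difference_mean_values[OF ef g h(1)])
    show "?P s t \<in> D" if "0 \<le> s" "s \<le> h" "0 \<le> t" "t \<le> h" for s t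
      using r1(2)[of s t] that h by simp
  qed
  have "dist (?H1 (?P s1 t1)) (?H1 p) < \<epsilon>" "dist (?H2 (?P s2 t2)) (?H2 p) < \<epsilon>"
    using r1(2)[of s1 t1] r2(2)[of s2 t2] st h by simp_all
  then have "\<bar>?H1 p - ?H2 p\<bar> < 2 * \<epsilon>"
    using eq by (simp add: dist_real_def)
  then show False
    by (simp add: \<epsilon>_def)
qed

end

section \<open>Vector fields and forms in jet coordinates\<close>

lemma finite_crds: "finite (crds :: ('a::finite) crd set)"
proof (rule finite_subset)
  show "crds \<subseteq> (UNIV :: 'a set) \<times> {0..Ntr} \<times> {0..Ntr}"
    by (auto simp: crds_def crd_ord_def)
qed simp

lemma mem_crds [simp]: "c \<in> crds \<longleftrightarrow> crd_ord c \<le> 6"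
  by (simp add: crds_def Ntr_def)

lemma crd_ord_upi [simp]: "crd_ord (upi j c) = Suc (crd_ord c)"
  by (cases c) (auto simp: upi_def crd_ord_def)

lemma inj_upi: "inj (upi j)"
  by (auto simp: inj_def upi_def prod_eq_iff)

lemma sum_if_eq_upi:
  fixes F :: "('a::finite) crd \<Rightarrow> real"
  assumes "c = upi j a0" "crd_ord a0 \<le> 6"
  shows "(\<Sum>a\<in>crds. if c = upi j a then F a else 0) = F a0"
proof -
  have "c = upi j a \<longleftrightarrow> a0 = a" for a
    using assms(1) inj_upi[of j] by (auto dest: injD)
  then have "(\<Sum>a\<in>crds. if c = upi j a then F a else 0) = (\<Sum>a\<in>crds. if a0 = a then F a else 0)"
    by presburger
  also have "\<dots> = F a0"
    using assms(2) by (simp add: sum.delta'[OF finite_crds])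
  finally show ?thesis .
qed

lemma sum_if_eq_upi1:
  fixes F :: "('a::finite) crd \<Rightarrow> real"
  assumes "a + b \<le> 7"
  shows "(\<Sum>x\<in>crds. if (\<delta>, a, b) = upi 1 x then F x else 0) = (if a = 0 then 0 else F (\<delta>, a - 1, b))"
proof (cases "a = 0")
  case False
  then have "(\<delta>, a, b) = upi 1 (\<delta>, a - 1, b)" by (simp add: upi_def)
  then show ?thesis using False assms by (simp add: sum_if_eq_upi crd_ord_def)
qed (simp add: upi_def)

lemma sum_if_eq_upi2:
  fixes F :: "('a::finite) crd \<Rightarrow> real"
  assumes "a + b \<le> 7"
  shows "(\<Sum>x\<in>crds. if (\<delta>, a, b) = upi 2 x then F x else 0) = (if b = 0 then 0 else F (\<delta>, a, b - 1))"
proof (cases "b = 0")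
  case False
  then have "(\<delta>, a, b) = upi 2 (\<delta>, a, b - 1)" by (simp add: upi_def)
  then show ?thesis using False assms by (simp add: sum_if_eq_upi crd_ord_def)
qed (simp add: upi_def)

lemma S2_eq_0_above:
  assumes "\<And>c c'. m \<le> crd_ord c + crd_ord c' \<Longrightarrow> W c c' q = 0" "m \<le> Suc (crd_ord c + crd_ord c')"
  shows "S2 j W c c' q = 0"
  using assms by (simp add: S2_def)

locale jet_domain = open_domain D for D :: "'a::finite pt set" +
  assumes membership_order2: "\<And>p q. \<forall>c. crd_ord c \<le> 2 \<longrightarrow> p c = q c \<Longrightarrow> p \<in> D \<longleftrightarrow> q \<in> D"
begin

definition smooth_field :: "'a vf \<Rightarrow> bool" where
  "smooth_field X \<longleftrightarrow> (\<forall>c. coord_smooth D (X c))"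

definition smooth_form2 :: "'a form2 \<Rightarrow> bool" where
  "smooth_form2 W \<longleftrightarrow> (\<forall>c c'. coord_smooth D (W c c'))"

definition smooth_form3 :: "'a form3 \<Rightarrow> bool" where
  "smooth_form3 W \<longleftrightarrow> (\<forall>a b c. coord_smooth D (W a b c))"

lemma smooth_field_TT: "smooth_field (TT j)"
  unfolding smooth_field_def TT_def[abs_def] by (auto intro!: coord_smooth_intros)

lemma smooth_field_Sv: "smooth_field X \<Longrightarrow> smooth_field (Sv j X)"
  unfolding smooth_field_def Sv_def[abs_def] by (auto split: prod.split intro!: coord_smooth_intros)

lemma smooth_field_Dl: "smooth_field (Dl l J)"
  unfolding Dl_def by (induction J) (auto intro: smooth_field_Sv smooth_field_TT)

lemma smooth_field_S1: "smooth_field w \<Longrightarrow> smooth_field (S1 j w)"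
  unfolding smooth_field_def S1_def[abs_def] by (auto intro!: coord_smooth_intros)

lemma smooth_form2_S2: "smooth_form2 W \<Longrightarrow> smooth_form2 (S2 j W)"
  unfolding smooth_form2_def S2_def[abs_def] by (auto intro!: coord_smooth_intros)

lemma smooth_field_dd0: "coord_smooth D f \<Longrightarrow> smooth_field (dd0 f)"
  unfolding smooth_field_def dd0_def by (auto intro!: coord_smooth_intros)

lemma smooth_form2_dd1: "smooth_field w \<Longrightarrow> smooth_form2 (dd1 w)"
  unfolding smooth_field_def smooth_form2_def dd1_def[abs_def] by (auto intro!: coord_smooth_intros)

lemma smooth_form3_dd2: "smooth_form2 W \<Longrightarrow> smooth_form3 (dd2 W)"
  unfolding smooth_form2_def smooth_form3_def dd2_def[abs_def] by (auto intro!: coord_smooth_intros)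

lemma coord_smooth_ic1: "smooth_field X \<Longrightarrow> smooth_field w \<Longrightarrow> coord_smooth D (ic1 X w)"
  unfolding smooth_field_def ic1_def[abs_def] by (auto intro!: coord_smooth_intros finite_crds)

lemma smooth_field_ic2: "smooth_field X \<Longrightarrow> smooth_form2 W \<Longrightarrow> smooth_field (ic2 X W)"
  unfolding smooth_field_def smooth_form2_def ic2_def[abs_def]
  by (auto intro!: coord_smooth_intros finite_crds)

lemma smooth_form2_ic3: "smooth_field X \<Longrightarrow> smooth_form3 W \<Longrightarrow> smooth_form2 (ic3 X W)"
  unfolding smooth_field_def smooth_form2_def smooth_form3_def ic3_def[abs_def]
  by (auto intro!: coord_smooth_intros finite_crds)

lemma smooth_field_lie1: "smooth_field X \<Longrightarrow> smooth_field w \<Longrightarrow> smooth_field (lie1 X w)"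
  using smooth_field_dd0[OF coord_smooth_ic1] smooth_field_ic2[OF _ smooth_form2_dd1]
  unfolding smooth_field_def lie1_def[abs_def] by (auto intro!: coord_smooth_intros)

lemma smooth_form2_lie2: "smooth_field X \<Longrightarrow> smooth_form2 W \<Longrightarrow> smooth_form2 (lie2 X W)"
  using smooth_form2_dd1[OF smooth_field_ic2] smooth_form2_ic3[OF _ smooth_form3_dd2]
  unfolding smooth_form2_def lie2_def[abs_def] by (auto intro!: coord_smooth_intros)

lemma smooth_field_hilbert:
  assumes "coord_smooth D L"
  shows "smooth_field (hilbert i L)"
proof -
  have "smooth_field (S1 i (dd0 L))" "smooth_field (lie1 (TT j) (S1 j (S1 i (dd0 L))))" for j
    using assms by (auto intro!: smooth_field_S1 smooth_field_lie1 smooth_field_TT smooth_field_dd0)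
  then show ?thesis
    unfolding smooth_field_def hilbert_def[abs_def] by (intro allI coord_smooth_intros; auto)
qed

lemma smooth_form2_Pop:
  assumes "smooth_form2 W"
  shows "smooth_form2 (Pop i W)"
proof -
  have "smooth_form2 (S2 i W)" "smooth_form2 (lie2 (TT j) (S2 j (S2 i W)))"
    "smooth_form2 (lie2 (TT j) (lie2 (TT k) (S2 j (S2 k (S2 i W)))))" for j k
    using assms by (auto intro!: smooth_form2_lie2 smooth_field_TT smooth_form2_S2)
  then show ?thesis
    unfolding smooth_form2_def Pop_def[abs_def] by (intro allI coord_smooth_intros; auto)
qed

lemma smooth_form2_fundamental_form:
  assumes "coord_smooth D L"
  shows "smooth_form2 (fundamental_form L)"
proof -
  have "smooth_form2 (Pop i (dd1 (hilbert k L)))" for i k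
    using assms by (intro smooth_form2_Pop smooth_form2_dd1 smooth_field_hilbert)
  then show ?thesis
    unfolding smooth_form2_def fundamental_form_def[abs_def] by (intro allI coord_smooth_intros; auto)
qed

lemma lie1_expand:
  assumes X: "smooth_field X" and w: "smooth_field w" and p: "p \<in> D"
  shows "lie1 X w c p = (\<Sum>a\<in>crds. pd c (X a) p * w a p) + (\<Sum>a\<in>crds. X a p * pd a (w c) p)"
proof -
  have sX: "coord_smooth D (X a)" and sw: "coord_smooth D (w a)" for a
    using X w by (auto simp: smooth_field_def)
  have "pd c (\<lambda>q. \<Sum>a\<in>crds. X a q * w a q) p = (\<Sum>a\<in>crds. pd c (X a) p * w a p + X a p * pd c (w a) p)"
    using p by (simp add: pd_sum_smooth pd_mult_smooth coord_smooth_mult sX sw)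
  then show ?thesis
    unfolding lie1_def dd0_def ic1_def[abs_def] ic2_def dd1_def
    by (simp add: sum.distrib sum_subtractf algebra_simps sum_distrib_left)
qed

lemma lie2_expand:
  assumes X: "smooth_field X" and W: "smooth_form2 W" and p: "p \<in> D"
  shows "lie2 X W c c' p = (\<Sum>a\<in>crds. pd c (X a) p * W a c' p)
     - (\<Sum>a\<in>crds. pd c' (X a) p * W a c p) + (\<Sum>a\<in>crds. X a p * pd a (W c c') p)"
proof -
  have sX: "coord_smooth D (X a)" and sW: "coord_smooth D (W a b)" for a b
    using X W by (auto simp: smooth_field_def smooth_form2_def)
  have "pd c (\<lambda>q. \<Sum>a\<in>crds. X a q * W a c' q) p = (\<Sum>a\<in>crds. pd c (X a) p * W a c' p + X a p * pd c (W a c') p)"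
    "pd c' (\<lambda>q. \<Sum>a\<in>crds. X a q * W a c q) p = (\<Sum>a\<in>crds. pd c' (X a) p * W a c p + X a p * pd c' (W a c) p)"
    using p by (simp_all add: pd_sum_smooth pd_mult_smooth coord_smooth_mult sX sW)
  then show ?thesis
    unfolding lie2_def dd1_def ic2_def[abs_def] ic3_def dd2_def
    by (simp add: sum.distrib sum_subtractf algebra_simps sum_distrib_left)
qed

definition total_deriv :: "nat \<Rightarrow> 'a fn \<Rightarrow> 'a fn" where
  "total_deriv j f p = (\<Sum>a\<in>crds. TT j a p * pd a f p)"

lemma total_deriv_eq_0_on: "\<forall>q\<in>D. f q = 0 \<Longrightarrow> p \<in> D \<Longrightarrow> total_deriv j f p = 0"
  unfolding total_deriv_def using pd_eq_0_on by simp

lemma coord_smooth_total_deriv: "coord_smooth D g \<Longrightarrow> coord_smooth D (total_deriv j g)"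
  using smooth_field_TT unfolding smooth_field_def total_deriv_def[abs_def]
  by (intro coord_smooth_intros finite_crds) auto

lemma pd_TT: "crd_ord a \<le> Ntr \<Longrightarrow> pd c (TT j a) p = (if c = upi j a then 1 else 0)"
  by (simp add: TT_def[abs_def] pd_coord)

lemma sum_pd_TT_mult:
  "(\<Sum>a\<in>crds. pd c (TT j a) p * F a) = (\<Sum>a\<in>crds. if c = upi j a then F a else 0)"
  by (intro sum.cong refl) (simp add: pd_TT Ntr_def)

lemma lie1_TT:
  assumes "smooth_field w" "p \<in> D"
  shows "lie1 (TT j) w c p = (\<Sum>a\<in>crds. if c = upi j a then w a p else 0) + total_deriv j (w c) p"
  unfolding lie1_expand[OF smooth_field_TT assms] total_deriv_def sum_pd_TT_mult ..

lemma lie2_TT: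
  assumes "smooth_form2 W" "p \<in> D"
  shows "lie2 (TT j) W c c' p = (\<Sum>a\<in>crds. if c = upi j a then W a c' p else 0)
     - (\<Sum>a\<in>crds. if c' = upi j a then W a c p else 0) + total_deriv j (W c c') p"
  unfolding lie2_expand[OF smooth_field_TT assms] total_deriv_def sum_pd_TT_mult ..

lemma lie2_TT_a0_00:
  assumes "smooth_form2 W" "p \<in> D" "0 < a" "a \<le> 7" "\<forall>q\<in>D. W (\<gamma>, a, 0) (\<beta>, 0, 0) q = 0"
  shows "lie2 (TT j) W (\<gamma>, a, 0) (\<beta>, 0, 0) p = (if j = 1 then W (\<gamma>, a - 1, 0) (\<beta>, 0, 0) p else 0)"
proof -
  have "(\<Sum>x\<in>crds. if (\<gamma>, a, 0) = upi j x then W x (\<beta>, 0, 0) p else 0)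
      = (if j = 1 then W (\<gamma>, a - 1, 0) (\<beta>, 0, 0) p else 0)"
  proof (cases "j = 1")
    case True
    then show ?thesis
      using assms(3,4) sum_if_eq_upi1[of a 0 \<gamma> "\<lambda>x. W x (\<beta>, 0, 0) p"] by simp
  qed (simp add: upi_def)
  moreover have "(\<Sum>x\<in>crds. if (\<beta>, 0, 0) = upi j x then W x (\<gamma>, a, 0) p else 0) = 0"
    by (intro sum.neutral) (auto simp: upi_def)
  ultimately show ?thesis
    using lie2_TT[OF assms(1,2)] total_deriv_eq_0_on[OF assms(5,2)] by simp
qed

definition depends_on_order2 :: "'a fn \<Rightarrow> bool" where
  "depends_on_order2 f \<longleftrightarrow> (\<forall>p\<in>D. \<forall>q. (\<forall>c. crd_ord c \<le> 2 \<longrightarrow> p c = q c) \<longrightarrow> f p = f q)"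

lemma pd_eq_0_above_order2:
  assumes "depends_on_order2 f" "p \<in> D" "2 < crd_ord c"
  shows "pd c f p = 0"
proof -
  have "coord_line f p c = (\<lambda>t. f p)"
    using assms unfolding depends_on_order2_def coord_line_def by (metis fun_upd_other leD)
  then show ?thesis
    by (intro pd_eqI) simp
qed

lemma depends_on_order2_pd:
  assumes f: "depends_on_order2 f"
  shows "depends_on_order2 (pd c f)"
  unfolding depends_on_order2_def
proof (intro ballI allI impI)
  fix p q
  assume p: "p \<in> D" and agree: "\<forall>c. crd_ord c \<le> 2 \<longrightarrow> p c = q c"
  have q: "q \<in> D"
    using membership_order2[OF agree] p by simp
  show "pd c f p = pd c f q"
  proof (cases "2 < crd_ord c")
    case True
    then show ?thesis using pd_eq_0_above_order2[OF f] p q by simp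
  next
    case False
    have "eventually (\<lambda>t. coord_line f p c t = coord_line f q c t) (nhds 0)"
      using eventually_coord_line_in_open[OF open_D p, of c]
    proof (rule eventually_mono)
      fix t
      assume "p(c := p c + t) \<in> D"
      moreover have "\<forall>c'. crd_ord c' \<le> 2 \<longrightarrow> (p(c := p c + t)) c' = (q(c := q c + t)) c'"
        using agree False by auto
      ultimately show "coord_line f p c t = coord_line f q c t"
        using f unfolding depends_on_order2_def coord_line_def by blast
    qed
    then show ?thesis
      unfolding pd_eq_deriv_coord_line by (rule deriv_cong_ev) simp
  qed
qed

lemma pd_total_deriv_above_order2:
  assumes "coord_smooth D g" "depends_on_order2 g" "p \<in> D" "2 < crd_ord c"
  shows "pd c (total_deriv j g) p = (\<Sum>a\<in>crds. if c = upi j a then pd a g p else 0)"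
proof -
  have TT: "coord_smooth D (TT j a)" for a
    using smooth_field_TT by (simp add: smooth_field_def)
  have "pd c (total_deriv j g) p = (\<Sum>a\<in>crds. pd c (TT j a) p * pd a g p + TT j a p * pd c (pd a g) p)"
    unfolding total_deriv_def[abs_def] using assms(1,3)
    by (simp add: pd_sum_smooth pd_mult_smooth coord_smooth_mult coord_smooth_pd TT)
  also have "\<dots> = (\<Sum>a\<in>crds. pd c (TT j a) p * pd a g p)"
    using pd_eq_0_above_order2[OF depends_on_order2_pd[OF assms(2)] assms(3,4)] by simp
  finally show ?thesis
    unfolding sum_pd_TT_mult .
qed

end

section \<open>The Hilbert forms and the fundamental form\<close>

locale lagrangian_chart = jet_domain D for D :: "'a::finite pt set" +
  fixes L :: "'a fn"
  assumes lagrangian: "lagrangian2 D L"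
begin

lemma coord_smooth_pds: "coord_smooth D (pds cs L)"
proof -
  have "smooth_upto n D (pds cs L)" for n
  proof (induction n arbitrary: cs)
    case 0
    then show ?case using lagrangian by (simp add: lagrangian2_def coord_line_def)
  next
    case (Suc n)
    have "smooth_upto n D (pd c (pds cs L))" for c
      using Suc[of "c # cs"] by simp
    then show ?case using lagrangian by (simp add: lagrangian2_def coord_line_def)
  qed
  then show ?thesis by (simp add: coord_smooth_def)
qed

lemma coord_smooth_L: "coord_smooth D L"
  using coord_smooth_pds[of "[]"] by simp

lemma depends_on_order2_L: "depends_on_order2 L"
  unfolding depends_on_order2_def
proof (intro ballI allI impI)
  fix p q
  assume p: "p \<in> D" and agree: "\<forall>c. crd_ord c \<le> 2 \<longrightarrow> p c = q c"
  then have "q \<in> D" using membership_order2 by blast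
  then show "L p = L q" using lagrangian p agree unfolding lagrangian2_def by blast
qed

lemma pd_commute_pds: "p \<in> D \<Longrightarrow> pd f (pd e (pds cs L)) p = pd e (pd f (pds cs L)) p"
  using pd_commute[OF coord_smooth_pds, of p f e cs] lagrangian
  unfolding lagrangian2_def by (metis pds.simps(2))

lemma pd_commute_L: "p \<in> D \<Longrightarrow> pd f (pd e L) p = pd e (pd f L) p"
  using pd_commute_pds[of p f e "[]"] by simp

lemma pd_commute_pd_L: "p \<in> D \<Longrightarrow> pd f (pd e (pd a L)) p = pd e (pd f (pd a L)) p"
  using pd_commute_pds[of p f e "[a]"] by simp

lemma pd_L_above_order2: "p \<in> D \<Longrightarrow> 2 < crd_ord c \<Longrightarrow> pd c (pd e L) p = 0"
  by (rule pd_eq_0_above_order2[OF depends_on_order2_pd[OF depends_on_order2_L]])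

abbreviation SSdL :: "nat \<Rightarrow> nat \<Rightarrow> 'a form1" where
  "SSdL i j \<equiv> S1 j (S1 i (dd0 L))"

lemma SSdL_eq:
  "SSdL i j c = (\<lambda>q. real (crd_ord c + 1) * (real (crd_ord c + 2) * pd (upi i (upi j c)) L q))"
  by (simp add: S1_def[abs_def] dd0_def)

lemma SSdL_eq_0: "1 \<le> crd_ord c \<Longrightarrow> q \<in> D \<Longrightarrow> SSdL i j c q = 0"
  unfolding SSdL_eq using pd_eq_0_above_order2[OF depends_on_order2_L] by simp

lemma smooth_field_SSdL: "smooth_field (SSdL i j)"
  by (intro smooth_field_S1 smooth_field_dd0 coord_smooth_L)

lemma depends_on_order2_SSdL: "depends_on_order2 (SSdL i j c)"
  using depends_on_order2_pd[OF depends_on_order2_L, of "upi i (upi j c)"]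
  unfolding SSdL_eq depends_on_order2_def by simp

lemma hilbert_eq_0:
  assumes "2 \<le> crd_ord c" "q \<in> D"
  shows "hilbert k L c q = 0"
proof -
  have "S1 k (dd0 L) c q = 0"
    using pd_eq_0_above_order2[OF depends_on_order2_L assms(2)] assms(1) by (simp add: S1_def dd0_def)
  moreover have "lie1 (TT j) (SSdL k j) c q = 0" for j
  proof -
    have "(\<Sum>a\<in>crds. if c = upi j a then SSdL k j a q else 0) = 0"
      using SSdL_eq_0[OF _ assms(2)] assms(1) by (intro sum.neutral) auto
    moreover have "total_deriv j (SSdL k j c) q = 0"
      using SSdL_eq_0 assms by (intro total_deriv_eq_0_on) auto
    ultimately show ?thesis
      using lie1_TT[OF smooth_field_SSdL assms(2)] by simp
  qed
  ultimately show ?thesis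
    unfolding hilbert_def by simp
qed

lemma hilbert_order1:
  assumes d: "crd_ord d = 1" and q: "q \<in> D"
  shows "hilbert k L d q = pd (upi k d) L q"
proof -
  have lower: "(\<Sum>a\<in>crds. if d = upi j a then SSdL k j a q else 0)
      = (if \<exists>a. d = upi j a then 2 * pd (upi k d) L q else 0)" for j
  proof (cases "\<exists>a. d = upi j a")
    case True
    then obtain a where a: "d = upi j a" by blast
    then have "crd_ord a = 0" using d by simp
    then show ?thesis
      using True a by (simp add: sum_if_eq_upi SSdL_eq)
  qed (auto intro!: sum.neutral)
  have "(\<exists>a. d = upi 1 a) \<longleftrightarrow> \<not> (\<exists>a. d = upi 2 a)"
    using d by (cases d) (auto simp: upi_def crd_ord_def add_is_1)
  then have "(\<Sum>j\<in>{1,2::nat}. \<Sum>a\<in>crds. if d = upi j a then SSdL k j a q else 0) = 2 * pd (upi k d) L q"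
    unfolding lower by auto
  moreover have "total_deriv j (SSdL k j d) q = 0" for j
    using SSdL_eq_0 d q by (intro total_deriv_eq_0_on) auto
  ultimately show ?thesis
    using d lie1_TT[OF smooth_field_SSdL q]
    by (simp add: hilbert_def S1_def dd0_def sum.distrib)
qed

lemma pd_hilbert_order0:
  assumes b: "crd_ord b = 0" and c: "3 \<le> crd_ord c" and p: "p \<in> D"
  shows "pd c (hilbert k L b) p
    = - (\<Sum>j\<in>{1,2::nat}. \<Sum>a\<in>crds. if c = upi j a then pd a (pd (upi k (upi j b)) L) p else 0)"
proof -
  let ?T = "\<lambda>j. total_deriv j (SSdL k j b)"
  have smooth_T: "coord_smooth D (?T j)" for j
    using smooth_field_SSdL by (intro coord_smooth_total_deriv) (simp add: smooth_field_def)
  have smooth_S: "coord_smooth D (S1 k (dd0 L) b)"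
    using smooth_field_S1[OF smooth_field_dd0[OF coord_smooth_L]] by (simp add: smooth_field_def)
  have "b \<noteq> upi j a" for j a
    using b crd_ord_upi[of j a] by auto
  then have "\<forall>q\<in>D. hilbert k L b q = S1 k (dd0 L) b q - 1/2 * (\<Sum>j\<in>{1,2}. ?T j q)"
    using lie1_TT[OF smooth_field_SSdL] by (simp add: hilbert_def)
  then have "pd c (hilbert k L b) p = pd c (\<lambda>q. S1 k (dd0 L) b q - 1/2 * (\<Sum>j\<in>{1,2}. ?T j q)) p"
    using p by (rule pd_cong_on)
  also have "\<dots> = pd c (S1 k (dd0 L) b) p - 1/2 * (\<Sum>j\<in>{1,2}. pd c (?T j) p)"
    using p smooth_T smooth_S
    by (simp only: pd_diff_smooth pd_cmult_smooth pd_sum_smooth coord_smooth_intros finite.intros)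
  finally have "pd c (hilbert k L b) p = pd c (S1 k (dd0 L) b) p - 1/2 * (\<Sum>j\<in>{1,2}. pd c (?T j) p)" .
  moreover have "pd c (S1 k (dd0 L) b) p = 0"
    using b c p by (simp add: S1_def[abs_def] dd0_def pd_L_above_order2)
  moreover have "pd c (?T j) p = 2 * (\<Sum>a\<in>crds. if c = upi j a then pd a (pd (upi k (upi j b)) L) p else 0)" for j
  proof -
    have pd_SSdL: "pd a (SSdL k j b) p = 2 * pd a (pd (upi k (upi j b)) L) p" for a
      using b p by (simp add: SSdL_eq pd_cmult_smooth coord_smooth_pd coord_smooth_L)
    have "pd c (?T j) p = (\<Sum>a\<in>crds. if c = upi j a then pd a (SSdL k j b) p else 0)"
      using c p smooth_field_SSdL depends_on_order2_SSdL
      by (intro pd_total_deriv_above_order2) (auto simp: smooth_field_def)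
    also have "\<dots> = 2 * (\<Sum>a\<in>crds. if c = upi j a then pd a (pd (upi k (upi j b)) L) p else 0)"
      unfolding pd_SSdL sum_distrib_left by (intro sum.cong) auto
    finally show ?thesis .
  qed
  ultimately show ?thesis
    by (simp add: field_simps)
qed

abbreviation dtheta :: "nat \<Rightarrow> 'a form2" where
  "dtheta k \<equiv> dd1 (hilbert k L)"

lemma dtheta_antisym: "dtheta k c c' p = - dtheta k c' c p"
  by (simp add: dd1_def)

lemma pd_hilbert_eq_0: "2 \<le> crd_ord c \<Longrightarrow> p \<in> D \<Longrightarrow> pd e (hilbert k L c) p = 0"
  using pd_eq_0_on hilbert_eq_0 by blast

lemma pd_hilbert_order1: "crd_ord d = 1 \<Longrightarrow> p \<in> D \<Longrightarrow> pd e (hilbert k L d) p = pd e (pd (upi k d) L) p"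
  using pd_cong_on[of "hilbert k L d" "pd (upi k d) L" p e] hilbert_order1 by simp

lemma dtheta_order21:
  "crd_ord c = 2 \<Longrightarrow> crd_ord d = 1 \<Longrightarrow> p \<in> D \<Longrightarrow> dtheta k c d p = pd c (pd (upi k d) L) p"
  by (simp add: dd1_def pd_hilbert_order1 pd_hilbert_eq_0)

lemma dtheta_order12:
  "crd_ord c = 2 \<Longrightarrow> crd_ord d = 1 \<Longrightarrow> p \<in> D \<Longrightarrow> dtheta k d c p = - pd c (pd (upi k d) L) p"
  using dtheta_order21 dtheta_antisym by metis

lemma dtheta_order30:
  assumes "crd_ord b = 0" "a + c = 3" "p \<in> D"
  shows "dtheta k (\<delta>, a, c) b p =
    - ((if a = 0 then 0 else pd (\<delta>, a - 1, c) (pd (upi k (upi 1 b)) L) p)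
      + (if c = 0 then 0 else pd (\<delta>, a, c - 1) (pd (upi k (upi 2 b)) L) p))"
proof -
  have "a + c \<le> 7" using assms(2) by simp
  note lower = sum_if_eq_upi1[OF this] sum_if_eq_upi2[OF this]
  have "(\<Sum>j\<in>{1,2::nat}. F j) = F 1 + F 2" for F :: "nat \<Rightarrow> real"
    by simp
  then show ?thesis
    using assms pd_hilbert_order0[of b "(\<delta>, a, c)" p k] pd_hilbert_eq_0[of "(\<delta>, a, c)" p b k]
    unfolding dd1_def by (simp only: lower crd_ord_def fst_conv snd_conv)
qed

lemma dtheta_order03:
  assumes "crd_ord b = 0" "a + c = 3" "p \<in> D"
  shows "dtheta k b (\<delta>, a, c) p =
    (if a = 0 then 0 else pd (\<delta>, a - 1, c) (pd (upi k (upi 1 b)) L) p)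
      + (if c = 0 then 0 else pd (\<delta>, a, c - 1) (pd (upi k (upi 2 b)) L) p)"
  using dtheta_order30[OF assms, of k \<delta>] dtheta_antisym[of k b "(\<delta>, a, c)" p] by simp

lemma pd_hilbert_eq_0_order4:
  assumes "4 \<le> crd_ord c + crd_ord c'" "crd_ord c' \<le> crd_ord c" "p \<in> D"
  shows "pd c (hilbert k L c') p = 0"
proof -
  consider "2 \<le> crd_ord c'" | "crd_ord c' = 1" | "crd_ord c' = 0" by linarith
  then show ?thesis
  proof cases
    case 1
    then show ?thesis using assms(3) by (rule pd_hilbert_eq_0)
  next
    case 2
    then show ?thesis using assms by (simp add: pd_hilbert_order1 pd_L_above_order2)
  next
    case 3
    then have "pd a (pd (upi k (upi j c')) L) p = 0" if "c = upi j a" for j a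
      using assms that by (simp add: pd_L_above_order2)
    then show ?thesis
      using assms 3 by (simp add: pd_hilbert_order0 if_distrib cong: if_cong)
  qed
qed

lemma dtheta_eq_0_order4:
  assumes "4 \<le> crd_ord c + crd_ord c'" "p \<in> D"
  shows "dtheta k c c' p = 0"
proof -
  have "dtheta k c c' p = 0" if "4 \<le> crd_ord c + crd_ord c'" "crd_ord c' \<le> crd_ord c" for c c'
    using that assms(2) by (simp add: dd1_def pd_hilbert_eq_0_order4 pd_hilbert_eq_0)
  then show ?thesis
    using assms(1) dtheta_antisym[of k c c' p] by (cases "crd_ord c' \<le> crd_ord c") auto
qed

lemma S2_dtheta_eq_0: "q \<in> D \<Longrightarrow> 3 \<le> crd_ord c + crd_ord c' \<Longrightarrow> S2 i (dtheta k) c c' q = 0"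
  by (rule S2_eq_0_above[where m=4]) (auto intro: dtheta_eq_0_order4)

lemma S2_S2_dtheta_eq_0: "q \<in> D \<Longrightarrow> 2 \<le> crd_ord c + crd_ord c' \<Longrightarrow> S2 j (S2 i (dtheta k)) c c' q = 0"
  by (rule S2_eq_0_above[where m=3]) (auto intro: S2_dtheta_eq_0)

lemma S2_S2_S2_dtheta_eq_0:
  "q \<in> D \<Longrightarrow> 1 \<le> crd_ord c + crd_ord c' \<Longrightarrow> S2 j' (S2 j (S2 i (dtheta k))) c c' q = 0"
  by (rule S2_eq_0_above[where m=2]) (auto intro: S2_S2_dtheta_eq_0)

lemma Pop_dtheta_20_00:
  assumes p: "p \<in> D"
  shows "Pop i (dtheta k) (\<gamma>, 2, 0) (\<beta>, 0, 0) p = 1/4 * S2 i (dtheta k) (\<gamma>, 2, 0) (\<beta>, 0, 0) p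
     - 1/24 * S2 1 (S2 i (dtheta k)) (\<gamma>, 1, 0) (\<beta>, 0, 0) p
     + 1/192 * S2 1 (S2 1 (S2 i (dtheta k))) (\<gamma>, 0, 0) (\<beta>, 0, 0) p"
proof -
  have smooth: "smooth_form2 (dtheta k)"
    by (intro smooth_form2_dd1 smooth_field_hilbert coord_smooth_L)
  have single: "lie2 (TT j) (S2 j (S2 i (dtheta k))) (\<gamma>, 2, 0) (\<beta>, 0, 0) p
      = (if j = 1 then S2 1 (S2 i (dtheta k)) (\<gamma>, 1, 0) (\<beta>, 0, 0) p else 0)" for j
    using lie2_TT_a0_00[OF smooth_form2_S2[OF smooth_form2_S2[OF smooth]] p, of 2]
    by (simp add: S2_S2_dtheta_eq_0 crd_ord_def)
  have double: "lie2 (TT j) (lie2 (TT j') (S2 j (S2 j' (S2 i (dtheta k))))) (\<gamma>, 2, 0) (\<beta>, 0, 0) p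
      = (if j = 1 \<and> j' = 1 then S2 1 (S2 1 (S2 i (dtheta k))) (\<gamma>, 0, 0) (\<beta>, 0, 0) p else 0)" for j j'
  proof -
    let ?W = "S2 j (S2 j' (S2 i (dtheta k)))"
    have W: "smooth_form2 ?W"
      by (intro smooth_form2_S2 smooth)
    have W_eq_0: "\<forall>q\<in>D. ?W (\<gamma>, a, 0) (\<beta>, 0, 0) q = 0" if "0 < a" for a
      using that by (simp add: S2_S2_S2_dtheta_eq_0 crd_ord_def)
    have inner: "lie2 (TT j') ?W (\<gamma>, a, 0) (\<beta>, 0, 0) q = (if j' = 1 then ?W (\<gamma>, a - 1, 0) (\<beta>, 0, 0) q else 0)"
      if "q \<in> D" "0 < a" "a \<le> 7" for a q
      using lie2_TT_a0_00[OF W that W_eq_0[OF that(2)]] .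
    have "\<forall>q\<in>D. lie2 (TT j') ?W (\<gamma>, 2, 0) (\<beta>, 0, 0) q = 0"
      using inner[of _ 2] W_eq_0[of 1] by (cases "j' = 1") simp_all
    then have "lie2 (TT j) (lie2 (TT j') ?W) (\<gamma>, 2, 0) (\<beta>, 0, 0) p
        = (if j = 1 then lie2 (TT j') ?W (\<gamma>, 1, 0) (\<beta>, 0, 0) p else 0)"
      using lie2_TT_a0_00[OF smooth_form2_lie2[OF smooth_field_TT W] p, of 2] by simp
    also have "\<dots> = (if j = 1 \<and> j' = 1 then ?W (\<gamma>, 0, 0) (\<beta>, 0, 0) p else 0)"
      using inner[OF p, of 1] by (cases "j = 1"; cases "j' = 1") simp_all
    finally show ?thesis
      by simp
  qed
  show ?thesis
    unfolding Pop_def single double by simp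
qed

lemma fundamental_form_20_00:
  assumes p: "p \<in> D"
  shows "fundamental_form L (\<gamma>, 2, 0) (\<beta>, 0, 0) p
     = -21/32 * pd (\<beta>, 2, 0) (pd (\<gamma>, 1, 1) L) p + 5/32 * pd (\<beta>, 1, 1) (pd (\<gamma>, 2, 0) L) p"
proof -
  have swap: "pd (\<gamma>, a, c) (pd (\<beta>, a', c') L) p = pd (\<beta>, a', c') (pd (\<gamma>, a, c) L) p" for a c a' c'
    using pd_commute_L[OF p] by simp
  show ?thesis
    unfolding fundamental_form_def Pop_dtheta_20_00[OF p] using p
    by (simp add: S2_def dtheta_order30 dtheta_order03 dtheta_order21 dtheta_order12
        crd_ord_def upi_def swap numeral_2_eq_2 field_simps)
qed

end

section \<open>Homogeneity and projectability\<close>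

definition delta11_weight :: "'a crd \<Rightarrow> real" where
  "delta11_weight a = (if fst (snd a) = 0 then 0 else real (crd_ord a))"

lemma Dl_11_eq: "crd_ord a \<le> 6 \<Longrightarrow> Dl 1 [1] a = (\<lambda>q. delta11_weight a * q a)"
  by (cases a) (auto simp: Dl_def Sv_def TT_def delta11_weight_def crd_ord_def upi_def Ntr_def)

lemma sum_pd_Dl_11_mult:
  fixes G :: "('a::finite) crd \<Rightarrow> real"
  assumes "crd_ord e \<le> 6"
  shows "(\<Sum>a\<in>crds. pd e (Dl 1 [1] a) q * G a) = delta11_weight e * G e"
proof -
  have "pd e (Dl 1 [1] a) q * G a = (if e = a then delta11_weight a * G a else 0)" if "crd_ord a \<le> 6" for a
    unfolding Dl_11_eq[OF that] by (simp add: pd_cmult_coord)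
  then have "(\<Sum>a\<in>crds. pd e (Dl 1 [1] a) q * G a) = (\<Sum>a\<in>crds. if e = a then delta11_weight a * G a else 0)"
    by (intro sum.cong refl) simp
  also have "\<dots> = delta11_weight e * G e"
    using assms by (subst sum.delta'[OF finite_crds]) simp
  finally show ?thesis .
qed

context lagrangian_chart
begin

lemma euler_relation_pd:
  assumes euler: "\<forall>q\<in>D. lie0 (Dl 1 [1]) L q = L q" and e: "crd_ord e \<le> 6" and q: "q \<in> D"
  shows "(\<Sum>a\<in>crds. Dl 1 [1] a q * pd e (pd a L) q) = (1 - delta11_weight e) * pd e L q"
proof -
  have X: "coord_smooth D (Dl 1 [1] a)" for a
    using smooth_field_Dl by (simp add: smooth_field_def)
  have "pd e L q = pd e (\<lambda>q. \<Sum>a\<in>crds. Dl 1 [1] a q * pd a L q) q"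
    using euler q by (intro pd_cong_on) (simp_all add: lie0_def ic1_def dd0_def)
  also have "\<dots> = (\<Sum>a\<in>crds. pd e (Dl 1 [1] a) q * pd a L q + Dl 1 [1] a q * pd e (pd a L) q)"
    using q X by (simp add: pd_sum_smooth pd_mult_smooth coord_smooth_mult coord_smooth_pd coord_smooth_L)
  also have "\<dots> = delta11_weight e * pd e L q + (\<Sum>a\<in>crds. Dl 1 [1] a q * pd e (pd a L) q)"
    by (simp only: sum.distrib sum_pd_Dl_11_mult[OF e])
  finally show ?thesis
    by (simp add: algebra_simps)
qed

lemma euler_relation_pd2:
  assumes euler: "\<forall>q\<in>D. lie0 (Dl 1 [1]) L q = L q" and e: "crd_ord e \<le> 6" and f: "crd_ord f \<le> 6"
    and p: "p \<in> D"
  shows "(\<Sum>a\<in>crds. Dl 1 [1] a p * pd a (pd f (pd e L)) p)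
    = (1 - delta11_weight e - delta11_weight f) * pd f (pd e L) p"
proof -
  have X: "coord_smooth D (Dl 1 [1] a)" for a
    using smooth_field_Dl by (simp add: smooth_field_def)
  have commute: "pd f (pd e (pd a L)) p = pd a (pd f (pd e L)) p" for a
  proof -
    have "pd f (pd e (pd a L)) p = pd f (pd a (pd e L)) p"
      using pd_commute_L p by (intro pd_cong_on) simp_all
    also have "\<dots> = pd a (pd f (pd e L)) p"
      using pd_commute_pd_L[OF p] by simp
    finally show ?thesis .
  qed
  have "(1 - delta11_weight e) * pd f (pd e L) p = pd f (\<lambda>q. (1 - delta11_weight e) * pd e L q) p"
    using p by (simp add: pd_cmult_smooth coord_smooth_pd coord_smooth_L)
  also have "\<dots> = pd f (\<lambda>q. \<Sum>a\<in>crds. Dl 1 [1] a q * pd e (pd a L) q) p"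
    using euler_relation_pd[OF euler e] p by (intro pd_cong_on) simp_all
  also have "\<dots> = (\<Sum>a\<in>crds. pd f (Dl 1 [1] a) p * pd e (pd a L) p + Dl 1 [1] a p * pd f (pd e (pd a L)) p)"
    using p X by (simp add: pd_sum_smooth pd_mult_smooth coord_smooth_mult coord_smooth_pd coord_smooth_L)
  also have "\<dots> = delta11_weight f * pd e (pd f L) p + (\<Sum>a\<in>crds. Dl 1 [1] a p * pd f (pd e (pd a L)) p)"
    by (simp only: sum.distrib sum_pd_Dl_11_mult[OF f])
  finally show ?thesis
    using pd_commute_L[OF p, of e f] commute by (simp add: algebra_simps)
qed

lemma euler_relation_fundamental_form_20_00:
  assumes euler: "\<forall>q\<in>D. lie0 (Dl 1 [1]) L q = L q" and p: "p \<in> D"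
  shows "(\<Sum>a\<in>crds. Dl 1 [1] a p * pd a (fundamental_form L (\<gamma>, 2, 0) (\<beta>, 0, 0)) p)
    = -3 * fundamental_form L (\<gamma>, 2, 0) (\<beta>, 0, 0) p"
proof -
  let ?\<Theta> = "fundamental_form L (\<gamma>, 2, 0) (\<beta>, 0, 0)" and ?X = "Dl 1 [1]"
  let ?A = "pd (\<beta>, 2, 0) (pd (\<gamma>, 1, 1) L)" and ?B = "pd (\<beta>, 1, 1) (pd (\<gamma>, 2, 0) L)"
  have \<Theta>: "\<forall>q\<in>D. ?\<Theta> q = -21/32 * ?A q + 5/32 * ?B q"
    by (simp add: fundamental_form_20_00)
  have euler_A: "(\<Sum>a\<in>crds. ?X a p * pd a ?A p) = -3 * ?A p"
    and euler_B: "(\<Sum>a\<in>crds. ?X a p * pd a ?B p) = -3 * ?B p"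
    using euler_relation_pd2[OF euler _ _ p, of "(\<gamma>, 1, 1)" "(\<beta>, 2, 0)"]
      euler_relation_pd2[OF euler _ _ p, of "(\<gamma>, 2, 0)" "(\<beta>, 1, 1)"]
    by (simp_all add: delta11_weight_def crd_ord_def)
  have pd_\<Theta>: "pd a ?\<Theta> p = -21/32 * pd a ?A p + 5/32 * pd a ?B p" for a
  proof -
    have A: "coord_smooth D ?A" and B: "coord_smooth D ?B"
      by (intro coord_smooth_pd coord_smooth_L)+
    have "pd a ?\<Theta> p = pd a (\<lambda>q. -21/32 * ?A q + 5/32 * ?B q) p"
      using \<Theta> p by (rule pd_cong_on)
    also have "\<dots> = -21/32 * pd a ?A p + 5/32 * pd a ?B p"
      by (simp only: pd_add_smooth[OF coord_smooth_cmult[OF A] coord_smooth_cmult[OF B] p]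
          pd_cmult_smooth[OF A p] pd_cmult_smooth[OF B p])
    finally show ?thesis .
  qed
  have "(\<Sum>a\<in>crds. ?X a p * pd a ?\<Theta> p)
      = -21/32 * (\<Sum>a\<in>crds. ?X a p * pd a ?A p) + 5/32 * (\<Sum>a\<in>crds. ?X a p * pd a ?B p)"
    unfolding pd_\<Theta> sum_distrib_left sum.distrib[symmetric]
    by (intro sum.cong) (simp_all add: algebra_simps)
  also have "\<dots> = -3 * ?\<Theta> p"
    unfolding euler_A euler_B using \<Theta> p by simp
  finally show ?thesis .
qed

lemma fundamental_form_20_00_eq_0:
  assumes euler: "\<forall>q\<in>D. lie0 (Dl 1 [1]) L q = L q"
    and invariant: "\<forall>c c'. lie2 (Dl 1 [1]) (fundamental_form L) c c' p = 0"
    and p: "p \<in> D"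
  shows "fundamental_form L (\<gamma>, 2, 0) (\<beta>, 0, 0) p = 0"
proof -
  have ord: "crd_ord (\<gamma>, 2, 0) \<le> 6" "crd_ord (\<beta>, 0, 0) \<le> 6"
    by (simp_all add: crd_ord_def)
  have "lie2 (Dl 1 [1]) (fundamental_form L) (\<gamma>, 2, 0) (\<beta>, 0, 0) p
      = 2 * fundamental_form L (\<gamma>, 2, 0) (\<beta>, 0, 0) p - 0 + -3 * fundamental_form L (\<gamma>, 2, 0) (\<beta>, 0, 0) p"
    unfolding lie2_expand[OF smooth_field_Dl smooth_form2_fundamental_form[OF coord_smooth_L] p]
      euler_relation_fundamental_form_20_00[OF euler p]
      sum_pd_Dl_11_mult[OF ord(1)] sum_pd_Dl_11_mult[OF ord(2)]
    by (simp add: delta11_weight_def crd_ord_def)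
  then show ?thesis
    using invariant by simp
qed

end

theorem mainTheorem19:
  fixes D :: "('a::finite) pt set" and L :: "'a fn"
  assumes "frame_domain D" and "lagrangian2 D L" and "homogeneous D L"
    and "projectable4 D (fundamental_form L)"
  shows "\<forall>p\<in>D. \<forall>\<alpha> \<beta>.
    pd (\<beta>, 2, 0) (pd (\<alpha>, 1, 1) L) p = pd (\<alpha>, 2, 0) (pd (\<beta>, 1, 1) L) p"
proof (intro ballI allI)
  fix p \<alpha> \<beta>
  assume p: "p \<in> D"
  interpret lagrangian_chart D L
    using assms(1,2) by unfold_locales (auto simp: frame_domain_def)
  have euler: "\<forall>q\<in>D. lie0 (Dl 1 [1]) L q = L q"
    using assms(3) by (simp add: homogeneous_def)
  have invariant: "\<forall>c c'. lie2 (Dl 1 [1]) (fundamental_form L) c c' p = 0"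
    using assms(4) p by (simp add: projectable4_def)
  let ?A = "\<lambda>\<gamma> \<beta>. pd (\<beta>, 2, 0) (pd (\<gamma>, 1, 1) L) p"
  have "-21/32 * ?A \<gamma> \<beta> + 5/32 * ?A \<beta> \<gamma> = 0" for \<gamma> \<beta>
    using fundamental_form_20_00_eq_0[OF euler invariant p, of \<gamma> \<beta>] fundamental_form_20_00[OF p, of \<gamma> \<beta>]
      pd_commute_L[OF p, of "(\<gamma>, 2, 0)" "(\<beta>, 1, 1)"]
    by simp
  from this[of \<alpha> \<beta>] this[of \<beta> \<alpha>] show "?A \<alpha> \<beta> = ?A \<beta> \<alpha>"
    by linarith
qed

end
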